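(* Let $\tau$ be a topology on $\mathbb{R}$ such that $\tau_e\subset\tau$ and every nonempty $\tau$-open set has the Baire property and is non-meager (with respect to the Euclidean topology). For any function $f\colon\mathbb{R}\to\mathbb{R}$, if $\mathrm{C}_\tau(f)$ is dense in $\mathbb{R}$, then $\mathrm{C}_\tau(f)$ is residual.
   Context: $\tau_e$ is the Euclidean topology. $\mathrm{C}_\tau(f)$ is the set of points at which $f\colon(\mathbb{R},\tau)\to(\mathbb{R},\tau_e)$ is continuous. A set is residual if its complement is meager (in the Euclidean topology). *)

theory Defs
  imports "HOL-Analysis.Analysis"
begin

definition nowhere_dense :: "real set \<Rightarrow> bool" where
  "nowhere_dense A \<longleftrightarrow> interior (closure A) = {}"

definition meager :: "real set \<Rightarrow> bool" where
  "meager A \<longleftrightarrow> (\<exists>N :: nat \<Rightarrow> real set. (\<forall>n. nowhere_dense (N n)) \<and> A \<subseteq> (\<Union>n. N n))"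

definition residual :: "real set \<Rightarrow> bool" where
  "residual A \<longleftrightarrow> meager (UNIV - A)"

definition baire_property :: "real set \<Rightarrow> bool" where
  "baire_property A \<longleftrightarrow> (\<exists>G M. open G \<and> meager M \<and> A = (G - M) \<union> (M - G))"

definition cont_points :: "real topology \<Rightarrow> (real \<Rightarrow> real) \<Rightarrow> real set" where
  "cont_points T f = {x. \<forall>e>0. \<exists>U. openin T U \<and> x \<in> U \<and> (\<forall>y\<in>U. \<bar>f y - f x\<bar> < e)}"

end

theory Submission
  imports Defs
begin

text \<open>
  Let \<open>G\<^sub>\<epsilon>\<close> be the union of all \<open>\<tau>\<close>-open sets on which \<open>f\<close> oscillates by less than \<open>\<epsilon>\<close>.
  Each \<open>G\<^sub>\<epsilon>\<close> is \<open>\<tau>\<close>-open and contains \<open>C\<^sub>\<tau>(f)\<close>, hence is dense, and \<open>C\<^sub>\<tau>(f)\<close> is the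
  intersection of the \<open>G\<^sub>1\<^sub>/\<^sub>n\<close>. A dense \<open>\<tau>\<close>-open set \<open>W\<close> has the Baire property,
  \<open>W = G \<triangle> M\<close> with \<open>G\<close> open and \<open>M\<close> meager; the complement of \<open>G\<close> is nowhere dense,
  since an open set inside it would meet \<open>W\<close> in a nonempty \<open>\<tau>\<close>-open subset of \<open>M\<close>.
  So every \<open>G\<^sub>1\<^sub>/\<^sub>n\<close> has meager complement, and so has \<open>C\<^sub>\<tau>(f)\<close>.
\<close>

lemma meager_subset: "meager B \<Longrightarrow> A \<subseteq> B \<Longrightarrow> meager A"
  unfolding meager_def by blast

lemma nowhere_dense_imp_meager: "nowhere_dense A \<Longrightarrow> meager A"
  unfolding meager_def by (rule exI[of _ "\<lambda>_. A"]) auto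

lemma meager_UN:
  assumes "\<And>n::nat. meager (A n)"
  shows "meager (\<Union>n. A n)"
proof -
  obtain N :: "nat \<Rightarrow> nat \<Rightarrow> real set"
    where N: "\<And>n k. nowhere_dense (N n k)" "\<And>n. A n \<subseteq> (\<Union>k. N n k)"
    using assms unfolding meager_def by metis
  define N' where "N' m = case_prod N (prod_decode m)" for m
  have "nowhere_dense (N' m)" for m
    by (simp add: N'_def split_beta N(1))
  moreover have "(\<Union>n. A n) \<subseteq> (\<Union>m. N' m)"
  proof
    fix x assume "x \<in> (\<Union>n. A n)"
    then obtain n k where "x \<in> N n k" using N(2) by blast
    then have "x \<in> N' (prod_encode (n, k))" by (simp add: N'_def)
    then show "x \<in> (\<Union>m. N' m)" by blast
  qed
  ultimately show ?thesis unfolding meager_def by blast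
qed

lemma meager_Un:
  assumes "meager A" "meager B"
  shows "meager (A \<union> B)"
proof -
  have "meager (\<Union>n::nat. if n = 0 then A else B)"
    by (rule meager_UN) (simp add: assms)
  moreover have "A \<union> B \<subseteq> (\<Union>n::nat. if n = 0 then A else B)"
    by (auto intro: UN_I[of 0] UN_I[of 1])
  ultimately show ?thesis by (rule meager_subset)
qed

lemma meager_Compl_dense_openin:
  fixes T :: "real topology"
  assumes open_imp_openin: "\<And>U. open U \<Longrightarrow> openin T U"
    and baire_nonmeager: "\<And>U. openin T U \<Longrightarrow> U \<noteq> {} \<Longrightarrow> baire_property U \<and> \<not> meager U"
    and W: "openin T W" "closure W = UNIV"
  shows "meager (- W)"
proof -
  have "W \<noteq> {}" using W(2) by auto
  then obtain G M where G: "open G" and M: "meager M" and W_eq: "W = (G - M) \<union> (M - G)"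
    using baire_nonmeager[OF W(1)] unfolding baire_property_def by blast
  have "interior (- G) = {}"
  proof (rule ccontr)
    let ?V = "interior (- G)"
    assume "?V \<noteq> {}"
    then have "?V \<inter> W \<noteq> {}"
      using W(2) open_Int_closure_eq_empty[of ?V W] by auto
    moreover have "openin T (?V \<inter> W)"
      using open_imp_openin[of ?V] W(1) by (simp add: openin_Int)
    moreover have "meager (?V \<inter> W)"
      using W_eq interior_subset[of "- G"] by (blast intro: meager_subset[OF M])
    ultimately show False using baire_nonmeager by blast
  qed
  then have "nowhere_dense (- G)"
    using G by (simp add: nowhere_dense_def closed_Compl)
  then have "meager (- G \<union> M)"
    by (intro meager_Un nowhere_dense_imp_meager M)
  moreover have "- W \<subseteq> - G \<union> M" using W_eq by blast
  ultimately show ?thesis by (rule meager_subset)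
qed

definition small_oscillation :: "real topology \<Rightarrow> (real \<Rightarrow> real) \<Rightarrow> real \<Rightarrow> real set" where
  "small_oscillation T f e =
     {x. \<exists>U. openin T U \<and> x \<in> U \<and> (\<forall>y\<in>U. \<forall>z\<in>U. \<bar>f y - f z\<bar> < e)}"

lemma openin_small_oscillation: "openin T (small_oscillation T f e)"
proof (subst openin_subopen, intro ballI)
  fix x assume "x \<in> small_oscillation T f e"
  then obtain U where "openin T U" "x \<in> U" "\<forall>y\<in>U. \<forall>z\<in>U. \<bar>f y - f z\<bar> < e"
    unfolding small_oscillation_def by blast
  moreover from this have "U \<subseteq> small_oscillation T f e"
    unfolding small_oscillation_def by blast
  ultimately show "\<exists>U. openin T U \<and> x \<in> U \<and> U \<subseteq> small_oscillation T f e" by blast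
qed

lemma cont_points_subset_small_oscillation:
  assumes "e > 0"
  shows "cont_points T f \<subseteq> small_oscillation T f e"
proof
  fix x assume "x \<in> cont_points T f"
  moreover have "e / 2 > 0" using assms by simp
  ultimately obtain U where U: "openin T U" "x \<in> U" "\<forall>y\<in>U. \<bar>f y - f x\<bar> < e / 2"
    unfolding cont_points_def by blast
  have "\<bar>f y - f z\<bar> < e" if "y \<in> U" "z \<in> U" for y z
  proof -
    have "\<bar>f y - f x\<bar> < e / 2" "\<bar>f z - f x\<bar> < e / 2" using U(3) that by auto
    then show ?thesis by linarith
  qed
  then show "x \<in> small_oscillation T f e"
    unfolding small_oscillation_def using U(1,2) by blast
qed

lemma INT_small_oscillation_subset_cont_points:
  "(\<Inter>n. small_oscillation T f (1 / (real n + 1))) \<subseteq> cont_points T f"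
proof
  fix x assume x: "x \<in> (\<Inter>n. small_oscillation T f (1 / (real n + 1)))"
  show "x \<in> cont_points T f"
    unfolding cont_points_def
  proof (intro CollectI allI impI)
    fix e :: real assume "e > 0"
    then obtain n where n: "1 / (real n + 1) < e"
      using reals_Archimedean by (metis inverse_eq_divide of_nat_Suc add.commute)
    from x obtain U where "openin T U" "x \<in> U" "\<forall>y\<in>U. \<forall>z\<in>U. \<bar>f y - f z\<bar> < 1 / (real n + 1)"
      unfolding small_oscillation_def by blast
    then show "\<exists>U. openin T U \<and> x \<in> U \<and> (\<forall>y\<in>U. \<bar>f y - f x\<bar> < e)"
      using n by (meson less_trans)
  qed
qed

theorem mainTheorem14:
  fixes T :: "real topology" and f :: "real \<Rightarrow> real"
  assumes "topspace T = UNIV"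
    and "\<And>U. open U \<Longrightarrow> openin T U"
    and "\<And>U. openin T U \<Longrightarrow> U \<noteq> {} \<Longrightarrow> baire_property U \<and> \<not> meager U"
    and "closure (cont_points T f) = UNIV"
  shows "residual (cont_points T f)"
proof -
  let ?G = "\<lambda>n::nat. small_oscillation T f (1 / (real n + 1))"
  have "cont_points T f \<subseteq> ?G n" for n
    by (rule cont_points_subset_small_oscillation) simp
  then have "closure (?G n) = UNIV" for n
    using closure_mono assms(4) by blast
  then have "meager (- ?G n)" for n
    using meager_Compl_dense_openin[OF assms(2,3) openin_small_oscillation] by blast
  then have "meager (\<Union>n. - ?G n)"
    by (rule meager_UN)
  moreover have "UNIV - cont_points T f \<subseteq> (\<Union>n. - ?G n)"
    using INT_small_oscillation_subset_cont_points by blast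
  ultimately show ?thesis
    unfolding residual_def by (rule meager_subset)
qed

end
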